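(* Let $M$ be a commutative and cocommutative Hopf algebra over $\mathbb{C}$ and $A$ a commutative $\mathbb{C}$-algebra. Let $r$ be an $A$-valued bicharacter on $M$ with symmetrization $s=r\circ r^t$, and let $s_1$ be any symmetric $A$-valued bicharacter on $M$. Put $s_2=s\circ s_1$. Then for all $a,b\in M$, \[ \mathrm{EQ}_{r}(a\bullet_{s_1}b)=\mathrm{EQ}_{r}(a)\bullet_{s_2}\mathrm{EQ}_{r}(b). \]
   Context: For a Hopf algebra $M$ with coproduct $\Delta$ and counit $\eta$, Sweedler notation: $\Delta(a)=\sum a'\otimes a''$, $\Delta^2(a)=\sum a'\otimes a''\otimes a'''$. An $A$-valued bicharacter on $M$ is a linear map $r:M\otimes M\to A$ with $r(1\otimes a)=\eta(a)=r(a\otimes 1)$, $r(ab\otimes c)=\sum r(a\otimes c')r(b\otimes c'')$, $r(a\otimes bc)=\sum r(a'\otimes b)r(a''\otimes c)$ for all $a,b,c\in M$. Convolution: $(r\circ t)(a\otimes b)=\sum r(a'\otimes b')t(a''\otimes b'')$; $r^t(a\otimes b)=r(b\otimes a)$; $t$ is symmetric if $t=t^t$; the symmetrization of $r$ is $r\circ r^t$. $M_A=M\otimes_{\mathbb{C}}A$. For a symmetric bicharacter $t$, $\bullet_t$ is the $A$-bilinear product on $M_A$ extending $a\bullet_t b=\sum a'b'\,t(a''\otimes b'')$. $\mathrm{EQ}_r:M\to M_A$, $\mathrm{EQ}_r(m)=\sum r(m'\otimes m'')m'''$, extended $A$-linearly to $M_A$. *)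

theory Defs
  imports Complex_Main
begin

(* Complex vector spaces are given by an abstract scalar multiplication
   sm :: complex => 'x => 'x satisfying the vector_space axioms. *)

definition clin :: "(complex \<Rightarrow> 'x::ab_group_add \<Rightarrow> 'x) \<Rightarrow> (complex \<Rightarrow> 'z::ab_group_add \<Rightarrow> 'z)
   \<Rightarrow> ('x \<Rightarrow> 'z) \<Rightarrow> bool" where
  "clin sX sZ f \<longleftrightarrow> (\<forall>x y. f (x + y) = f x + f y) \<and> (\<forall>c x. f (sX c x) = sZ c (f x))"

definition cbil :: "(complex \<Rightarrow> 'x::ab_group_add \<Rightarrow> 'x) \<Rightarrow> (complex \<Rightarrow> 'y::ab_group_add \<Rightarrow> 'y)
   \<Rightarrow> (complex \<Rightarrow> 'z::ab_group_add \<Rightarrow> 'z) \<Rightarrow> ('x \<Rightarrow> 'y \<Rightarrow> 'z) \<Rightarrow> bool" where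
  "cbil sX sY sZ f \<longleftrightarrow> (\<forall>y. clin sX sZ (\<lambda>x. f x y)) \<and> (\<forall>x. clin sY sZ (f x))"

definition ctril :: "(complex \<Rightarrow> 'x::ab_group_add \<Rightarrow> 'x) \<Rightarrow> (complex \<Rightarrow> 'y::ab_group_add \<Rightarrow> 'y)
   \<Rightarrow> (complex \<Rightarrow> 'w::ab_group_add \<Rightarrow> 'w) \<Rightarrow> ('x \<Rightarrow> 'y \<Rightarrow> 'w \<Rightarrow> complex) \<Rightarrow> bool" where
  "ctril sX sY sW f \<longleftrightarrow> (\<forall>y w. clin sX (*) (\<lambda>x. f x y w)) \<and> (\<forall>x w. clin sY (*) (\<lambda>y. f x y w))
      \<and> (\<forall>x y. clin sW (*) (f x y))"

(* Elements of a tensor product X \<otimes> Y are represented by finite lists of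
   pure tensors [(x1,y1),...] standing for x1\<otimes>y1 + ... ; two representatives
   denote the same tensor iff every linear functional on X \<otimes> Y (i.e. every
   complex-bilinear form on X \<times> Y) takes the same value on them. *)
definition teq2 :: "(complex \<Rightarrow> 'x::ab_group_add \<Rightarrow> 'x) \<Rightarrow> (complex \<Rightarrow> 'y::ab_group_add \<Rightarrow> 'y)
   \<Rightarrow> ('x \<times> 'y) list \<Rightarrow> ('x \<times> 'y) list \<Rightarrow> bool" where
  "teq2 sX sY xs ys \<longleftrightarrow> (\<forall>\<phi>. cbil sX sY (*) \<phi> \<longrightarrow>
      (\<Sum>(x,y)\<leftarrow>xs. \<phi> x y) = (\<Sum>(x,y)\<leftarrow>ys. \<phi> x y))"

definition teq3 :: "(complex \<Rightarrow> 'x::ab_group_add \<Rightarrow> 'x) \<Rightarrow> (complex \<Rightarrow> 'y::ab_group_add \<Rightarrow> 'y)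
   \<Rightarrow> (complex \<Rightarrow> 'w::ab_group_add \<Rightarrow> 'w) \<Rightarrow> ('x \<times> 'y \<times> 'w) list \<Rightarrow> ('x \<times> 'y \<times> 'w) list \<Rightarrow> bool" where
  "teq3 sX sY sW xs ys \<longleftrightarrow> (\<forall>\<phi>. ctril sX sY sW \<phi> \<longrightarrow>
      (\<Sum>(x,y,w)\<leftarrow>xs. \<phi> x y w) = (\<Sum>(x,y,w)\<leftarrow>ys. \<phi> x y w))"

definition calg :: "(complex \<Rightarrow> 'a::comm_ring_1 \<Rightarrow> 'a) \<Rightarrow> bool" where
  "calg sm \<longleftrightarrow> vector_space sm \<and> (\<forall>c x y. sm c (x * y) = sm c x * y)"

(* Commutative and cocommutative Hopf algebra over C with coproduct \<Delta>
   (\<Delta> x is a representative of the tensor \<Delta>(x) = \<Sum> x' \<otimes> x''),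
   counit \<eta> and antipode S. *)
definition cc_hopf :: "(complex \<Rightarrow> 'm::comm_ring_1 \<Rightarrow> 'm) \<Rightarrow> ('m \<Rightarrow> ('m \<times> 'm) list)
   \<Rightarrow> ('m \<Rightarrow> complex) \<Rightarrow> ('m \<Rightarrow> 'm) \<Rightarrow> bool" where
  "cc_hopf sm \<Delta> \<eta> S \<longleftrightarrow>
     calg sm
   \<and> (\<forall>x y. teq2 sm sm (\<Delta> (x + y)) (\<Delta> x @ \<Delta> y))
   \<and> (\<forall>c x. teq2 sm sm (\<Delta> (sm c x)) [(sm c a, b). (a, b) \<leftarrow> \<Delta> x])
   \<and> (\<forall>x y. teq2 sm sm (\<Delta> (x * y)) [(a * c, b * d). (a, b) \<leftarrow> \<Delta> x, (c, d) \<leftarrow> \<Delta> y])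
   \<and> teq2 sm sm (\<Delta> 1) [(1, 1)]
   \<and> (\<forall>x. teq3 sm sm sm [(a1, a2, b). (a, b) \<leftarrow> \<Delta> x, (a1, a2) \<leftarrow> \<Delta> a]
                         [(a, b1, b2). (a, b) \<leftarrow> \<Delta> x, (b1, b2) \<leftarrow> \<Delta> b])
   \<and> clin sm (*) \<eta>
   \<and> (\<forall>x y. \<eta> (x * y) = \<eta> x * \<eta> y) \<and> \<eta> 1 = 1
   \<and> (\<forall>x. (\<Sum>(a, b)\<leftarrow>\<Delta> x. sm (\<eta> a) b) = x)
   \<and> (\<forall>x. (\<Sum>(a, b)\<leftarrow>\<Delta> x. sm (\<eta> b) a) = x)
   \<and> clin sm sm S
   \<and> (\<forall>x. (\<Sum>(a, b)\<leftarrow>\<Delta> x. S a * b) = sm (\<eta> x) 1)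
   \<and> (\<forall>x. (\<Sum>(a, b)\<leftarrow>\<Delta> x. a * S b) = sm (\<eta> x) 1)
   \<and> (\<forall>x. teq2 sm sm (\<Delta> x) (map prod.swap (\<Delta> x)))"

(* A-valued bicharacter: a linear map M \<otimes> M \<rightarrow> A, given as a bilinear map *)
definition bichar :: "(complex \<Rightarrow> 'm::comm_ring_1 \<Rightarrow> 'm) \<Rightarrow> (complex \<Rightarrow> 'a::comm_ring_1 \<Rightarrow> 'a)
   \<Rightarrow> ('m \<Rightarrow> ('m \<times> 'm) list) \<Rightarrow> ('m \<Rightarrow> complex) \<Rightarrow> ('m \<Rightarrow> 'm \<Rightarrow> 'a) \<Rightarrow> bool" where
  "bichar smM smA \<Delta> \<eta> r \<longleftrightarrow>
     cbil smM smM smA r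
   \<and> (\<forall>a. r 1 a = smA (\<eta> a) 1 \<and> r a 1 = smA (\<eta> a) 1)
   \<and> (\<forall>a b c. r (a * b) c = (\<Sum>(c1, c2)\<leftarrow>\<Delta> c. r a c1 * r b c2))
   \<and> (\<forall>a b c. r a (b * c) = (\<Sum>(a1, a2)\<leftarrow>\<Delta> a. r a1 b * r a2 c))"

definition conv :: "('m \<Rightarrow> ('m \<times> 'm) list) \<Rightarrow> ('m \<Rightarrow> 'm \<Rightarrow> 'a::comm_ring_1)
   \<Rightarrow> ('m \<Rightarrow> 'm \<Rightarrow> 'a) \<Rightarrow> 'm \<Rightarrow> 'm \<Rightarrow> 'a" where
  "conv \<Delta> r t a b = (\<Sum>((a1, a2), (b1, b2))\<leftarrow>List.product (\<Delta> a) (\<Delta> b). r a1 b1 * t a2 b2)"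

definition transp :: "('m \<Rightarrow> 'm \<Rightarrow> 'a) \<Rightarrow> 'm \<Rightarrow> 'm \<Rightarrow> 'a" where
  "transp r a b = r b a"

definition symmetric_bichar :: "('m \<Rightarrow> 'm \<Rightarrow> 'a) \<Rightarrow> bool" where
  "symmetric_bichar t \<longleftrightarrow> t = transp t"

definition symmetrization :: "('m \<Rightarrow> ('m \<times> 'm) list) \<Rightarrow> ('m \<Rightarrow> 'm \<Rightarrow> 'a::comm_ring_1)
   \<Rightarrow> 'm \<Rightarrow> 'm \<Rightarrow> 'a" where
  "symmetrization \<Delta> r = conv \<Delta> r (transp r)"

(* Elements of M_A = M \<otimes> A are represented by lists of pure tensors (m, \<alpha>) ~ m \<otimes> \<alpha>. *)

definition bulletM :: "('m::comm_ring_1 \<Rightarrow> ('m \<times> 'm) list) \<Rightarrow> ('m \<Rightarrow> 'm \<Rightarrow> 'a)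
   \<Rightarrow> 'm \<Rightarrow> 'm \<Rightarrow> ('m \<times> 'a) list" where
  "bulletM \<Delta> t a b = [(a1 * b1, t a2 b2). (a1, a2) \<leftarrow> \<Delta> a, (b1, b2) \<leftarrow> \<Delta> b]"

(* A-bilinear extension of \<bullet>_t to M_A *)
definition bulletA :: "('m::comm_ring_1 \<Rightarrow> ('m \<times> 'm) list) \<Rightarrow> ('m \<Rightarrow> 'm \<Rightarrow> 'a::comm_ring_1)
   \<Rightarrow> ('m \<times> 'a) list \<Rightarrow> ('m \<times> 'a) list \<Rightarrow> ('m \<times> 'a) list" where
  "bulletA \<Delta> t xs ys = concat [[(n, \<gamma> * (\<alpha> * \<beta>)). (n, \<gamma>) \<leftarrow> bulletM \<Delta> t m m'].
                                  (m, \<alpha>) \<leftarrow> xs, (m', \<beta>) \<leftarrow> ys]"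

definition EQ :: "('m \<Rightarrow> ('m \<times> 'm) list) \<Rightarrow> ('m \<Rightarrow> 'm \<Rightarrow> 'a) \<Rightarrow> 'm \<Rightarrow> ('m \<times> 'a) list" where
  "EQ \<Delta> r m = [(m3, r m1 m2). (p, m3) \<leftarrow> \<Delta> m, (m1, m2) \<leftarrow> \<Delta> p]"

(* A-linear extension of EQ_r to M_A *)
definition EQA :: "('m \<Rightarrow> ('m \<times> 'm) list) \<Rightarrow> ('m \<Rightarrow> 'm \<Rightarrow> 'a::comm_ring_1)
   \<Rightarrow> ('m \<times> 'a) list \<Rightarrow> ('m \<times> 'a) list" where
  "EQA \<Delta> r xs = concat [[(n, \<beta> * \<alpha>). (n, \<beta>) \<leftarrow> EQ \<Delta> r m]. (m, \<alpha>) \<leftarrow> xs]"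

end

theory Submission
  imports Defs
begin

text \<open>Pair both sides with an arbitrary bilinear form \<open>\<phi>\<close> on \<open>M \<times> A\<close>. Each pairing becomes an
  iterated Sweedler sum over \<open>\<Delta>\<^sup>5 a \<otimes> \<Delta>\<^sup>5 b\<close> of an integrand that is multilinear in all twelve
  factors: on the left one expands \<open>r(a'b', a''b'')\<close> by the two bicharacter rules, on the right
  one unfolds \<open>s\<^sub>2 = (r \<circ> r\<^sup>t) \<circ> s\<^sub>1\<close>. Coassociativity makes such a sum independent of the order in
  which the factors were split off, and cocommutativity makes it invariant under permuting the
  factors; the two integrands differ by such a permutation.\<close>

lemma sum_list_concat: "sum_list (concat xss) = (\<Sum>xs\<leftarrow>xss. sum_list xs :: 'b::monoid_add)"
  by (induction xss) simp_all

lemma sum_list_commute: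
  "(\<Sum>x\<leftarrow>xs. \<Sum>y\<leftarrow>ys. f x y) = (\<Sum>y\<leftarrow>ys. \<Sum>x\<leftarrow>xs. f x y :: 'b::comm_monoid_add)"
  by (induction xs) (simp_all add: sum_list_addf)

lemma sum_list_commute_pairs:
  "(\<Sum>(a,b)\<leftarrow>xs. \<Sum>(c,d)\<leftarrow>ys. f a b c d) = (\<Sum>(c,d)\<leftarrow>ys. \<Sum>(a,b)\<leftarrow>xs. f a b c d :: 'b::comm_monoid_add)"
  using sum_list_commute[where f="\<lambda>p q. f (fst p) (snd p) (fst q) (snd q)"] by (simp add: split_def)

lemma sum_list_pairs_mult_const: "(\<Sum>(u,v)\<leftarrow>L. f u v) * (c::'b::semiring_0) = (\<Sum>(u,v)\<leftarrow>L. f u v * c)"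
  by (induction L) (auto simp: distrib_right)

lemma sum_list_pairs_const_mult: "(c::'b::semiring_0) * (\<Sum>(u,v)\<leftarrow>L. f u v) = (\<Sum>(u,v)\<leftarrow>L. c * f u v)"
  by (induction L) (auto simp: distrib_left)

lemma sum_list_product:
  "(\<Sum>((a1, a2), (b1, b2))\<leftarrow>List.product xs ys. f a1 a2 b1 b2) =
   (\<Sum>(a1,a2)\<leftarrow>xs. \<Sum>(b1,b2)\<leftarrow>ys. f a1 a2 b1 b2 :: 'b::comm_monoid_add)"
  by (induction xs) (auto simp: split_def comp_def)

lemma conv_eq_sum: "conv \<Delta> r t a b = (\<Sum>(a1,a2)\<leftarrow>\<Delta> a. \<Sum>(b1,b2)\<leftarrow>\<Delta> b. r a1 b1 * t a2 b2)"
  unfolding conv_def by (rule sum_list_product)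

lemma length_3_cases: "length xs = 3 \<Longrightarrow> \<exists>a b c. xs = [a,b,c]"
  by (simp add: numeral_eq_Suc length_Suc_conv) blast

lemma length_4_cases: "length xs = 4 \<Longrightarrow> \<exists>a b c d. xs = [a,b,c,d]"
  by (simp add: numeral_eq_Suc length_Suc_conv) blast

lemma length_6_cases: "length xs = 6 \<Longrightarrow> \<exists>a b c d e f. xs = [a,b,c,d,e,f]"
  by (simp add: numeral_eq_Suc length_Suc_conv) blast

definition swap_slots :: "nat \<Rightarrow> 'a list \<Rightarrow> 'a list" where
  "swap_slots i xs = xs[i := xs ! Suc i, Suc i := xs ! i]"

fun swap_slots_seq :: "nat list \<Rightarrow> 'a list \<Rightarrow> 'a list" where
  "swap_slots_seq [] xs = xs"
| "swap_slots_seq (i # is) xs = swap_slots_seq is (swap_slots i xs)"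

lemma swap_slots_list_update:
  assumes "Suc i < length xs" "j < length xs"
  shows "swap_slots i (xs[j := z]) = (swap_slots i xs)[(if j = i then Suc i else if j = Suc i then i else j) := z]"
  using assms unfolding swap_slots_def by (auto simp: list_eq_iff_nth_eq nth_list_update)

lemma swap_slots_middle: "length ys = i \<Longrightarrow> swap_slots i (ys @ u # v # zs) = ys @ v # u # zs"
  by (auto simp: swap_slots_def nth_append list_update_append)

locale cocomm_hopf =
  fixes smM :: "complex \<Rightarrow> 'm::comm_ring_1 \<Rightarrow> 'm" and \<Delta> :: "'m \<Rightarrow> ('m \<times> 'm) list"
    and \<eta> :: "'m \<Rightarrow> complex" and S :: "'m \<Rightarrow> 'm"
  assumes hopf: "cc_hopf smM \<Delta> \<eta> S"
begin

lemma cbil_iff: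
  "cbil smM smM (*) \<psi> \<longleftrightarrow>
     (\<forall>x y z. \<psi> (x+y) z = \<psi> x z + \<psi> y z \<and> \<psi> z (x+y) = \<psi> z x + \<psi> z y)
   \<and> (\<forall>c x z. \<psi> (smM c x) z = c * \<psi> x z \<and> \<psi> z (smM c x) = c * \<psi> z x)"
  by (auto simp: cbil_def clin_def)

lemma ctril_iff:
  "ctril smM smM smM T \<longleftrightarrow>
     (\<forall>x y z w. T (x+y) z w = T x z w + T y z w \<and> T z (x+y) w = T z x w + T z y w
                \<and> T z w (x+y) = T z w x + T z w y)
   \<and> (\<forall>c x z w. T (smM c x) z w = c * T x z w \<and> T z (smM c x) w = c * T z x w
                \<and> T z w (smM c x) = c * T z w x)"
  by (auto simp: ctril_def clin_def)

context
  fixes \<psi> :: "'m \<Rightarrow> 'm \<Rightarrow> complex"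
  assumes bil: "cbil smM smM (*) \<psi>"
begin

lemma coproduct_add: "(\<Sum>(u,v)\<leftarrow>\<Delta> (x+y). \<psi> u v) = (\<Sum>(u,v)\<leftarrow>\<Delta> x. \<psi> u v) + (\<Sum>(u,v)\<leftarrow>\<Delta> y. \<psi> u v)"
  using hopf bil unfolding cc_hopf_def teq2_def by auto

lemma coproduct_scale: "(\<Sum>(u,v)\<leftarrow>\<Delta> (smM c x). \<psi> u v) = c * (\<Sum>(u,v)\<leftarrow>\<Delta> x. \<psi> u v)"
proof -
  have "(\<Sum>(u,v)\<leftarrow>\<Delta> (smM c x). \<psi> u v) = (\<Sum>(u,v)\<leftarrow>[(smM c a, b). (a, b) \<leftarrow> \<Delta> x]. \<psi> u v)"
    using hopf bil unfolding cc_hopf_def teq2_def by blast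
  also have "\<dots> = (\<Sum>(u,v)\<leftarrow>\<Delta> x. c * \<psi> u v)"
    using bil by (simp add: cbil_iff comp_def split_def)
  finally show ?thesis by (simp add: sum_list_const_mult split_def)
qed

lemma coproduct_mult:
  "(\<Sum>(u,v)\<leftarrow>\<Delta> (x*y). \<psi> u v) = (\<Sum>(a1,a2)\<leftarrow>\<Delta> x. \<Sum>(b1,b2)\<leftarrow>\<Delta> y. \<psi> (a1*b1) (a2*b2))"
proof -
  have "(\<Sum>(u,v)\<leftarrow>\<Delta> (x*y). \<psi> u v) = (\<Sum>(u,v)\<leftarrow>[(a * c, b * d). (a, b) \<leftarrow> \<Delta> x, (c, d) \<leftarrow> \<Delta> y]. \<psi> u v)"
    using hopf bil unfolding cc_hopf_def teq2_def by blast
  then show ?thesis by (simp add: sum_list_concat map_concat comp_def split_def)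
qed

lemma coproduct_cocomm: "(\<Sum>(u,v)\<leftarrow>\<Delta> x. \<psi> u v) = (\<Sum>(u,v)\<leftarrow>\<Delta> x. \<psi> v u)"
proof -
  have "(\<Sum>(u,v)\<leftarrow>\<Delta> x. \<psi> u v) = (\<Sum>(u,v)\<leftarrow>map prod.swap (\<Delta> x). \<psi> u v)"
    using hopf bil unfolding cc_hopf_def teq2_def by blast
  then show ?thesis by (simp add: comp_def split_def)
qed

end

lemma coproduct_coassoc:
  assumes "ctril smM smM smM T"
  shows "(\<Sum>(a,b)\<leftarrow>\<Delta> x. \<Sum>(a1,a2)\<leftarrow>\<Delta> a. T a1 a2 b) = (\<Sum>(a,b)\<leftarrow>\<Delta> x. \<Sum>(b1,b2)\<leftarrow>\<Delta> b. T a b1 b2)"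
proof -
  have "(\<Sum>(u,v,w)\<leftarrow>[(a1, a2, b). (a, b) \<leftarrow> \<Delta> x, (a1, a2) \<leftarrow> \<Delta> a]. T u v w) =
        (\<Sum>(u,v,w)\<leftarrow>[(a, b1, b2). (a, b) \<leftarrow> \<Delta> x, (b1, b2) \<leftarrow> \<Delta> b]. T u v w)"
    using hopf assms unfolding cc_hopf_def teq3_def by blast
  then show ?thesis by (simp add: sum_list_concat map_concat comp_def split_def)
qed

text \<open>Pure tensors with \<open>n + 1\<close> factors are encoded as lists; \<open>\<Delta>\<^sup>n\<close> repeatedly splits the
  leftmost factor.\<close>

fun iter_coproduct :: "nat \<Rightarrow> 'm \<Rightarrow> 'm list list" where
  "iter_coproduct 0 a = [[a]]"
| "iter_coproduct (Suc n) a = concat (map (\<lambda>(x,y). map (\<lambda>xs. xs @ [y]) (iter_coproduct n x)) (\<Delta> a))"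

definition sweedler :: "nat \<Rightarrow> 'm \<Rightarrow> ('m list \<Rightarrow> complex) \<Rightarrow> complex" where
  "sweedler n a F = (\<Sum>xs\<leftarrow>iter_coproduct n a. F xs)"

lemma sweedler_0 [simp]: "sweedler 0 a F = F [a]"
  by (simp add: sweedler_def)

lemma sweedler_Suc: "sweedler (Suc n) a F = (\<Sum>(x,y)\<leftarrow>\<Delta> a. sweedler n x (\<lambda>xs. F (xs @ [y])))"
  by (simp add: sweedler_def sum_list_concat map_concat comp_def split_def)

lemma length_iter_coproduct: "xs \<in> set (iter_coproduct n a) \<Longrightarrow> length xs = Suc n"
  by (induction n arbitrary: a xs) auto

lemma sweedler_cong: "(\<And>xs. length xs = Suc n \<Longrightarrow> F xs = G xs) \<Longrightarrow> sweedler n a F = sweedler n a G"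
  unfolding sweedler_def by (rule arg_cong[where f=sum_list], rule map_cong) (auto dest: length_iter_coproduct)

lemma sweedler_add: "sweedler n a (\<lambda>xs. F xs + G xs) = sweedler n a F + sweedler n a G"
  by (simp add: sweedler_def sum_list_addf)

lemma sweedler_const_mult: "sweedler n a (\<lambda>xs. c * F xs) = c * sweedler n a F"
  by (simp add: sweedler_def sum_list_const_mult)

lemma sweedler_sum_pairs:
  "sweedler n a (\<lambda>xs. \<Sum>(u,v)\<leftarrow>L. T u v xs) = (\<Sum>(u,v)\<leftarrow>L. sweedler n a (T u v))"
  unfolding sweedler_def
  using sum_list_commute[where f="\<lambda>xs p. T (fst p) (snd p) xs" and xs="iter_coproduct n a" and ys=L]
  by (simp add: split_def)

definition multilinear :: "nat \<Rightarrow> ('m list \<Rightarrow> complex) \<Rightarrow> bool" where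
 "multilinear n F \<longleftrightarrow> (\<forall>xs i. length xs = n \<longrightarrow> i < n \<longrightarrow>
     (\<forall>x y. F (xs[i := x + y]) = F (xs[i := x]) + F (xs[i := y])) \<and>
     (\<forall>c x. F (xs[i := smM c x]) = c * F (xs[i := x])))"

lemma multilinear_slot:
  assumes "multilinear m F" "length xs + length ys + 1 = m"
  shows "F (xs @ (x+y) # ys) = F (xs @ x # ys) + F (xs @ y # ys)"
    and "F (xs @ smM c x # ys) = c * F (xs @ x # ys)"
proof -
  let ?zs = "xs @ x # ys"
  have l: "length ?zs = m" "length xs < m" using assms(2) by auto
  have u: "\<And>z. ?zs[length xs := z] = xs @ z # ys" by simp
  have "F (?zs[length xs := x+y]) = F (?zs[length xs := x]) + F (?zs[length xs := y])"
    using assms(1) l unfolding multilinear_def by blast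
  then show "F (xs @ (x+y) # ys) = F (xs @ x # ys) + F (xs @ y # ys)" by (simp only: u)
  have "F (?zs[length xs := smM c x]) = c * F (?zs[length xs := x])"
    using assms(1) l unfolding multilinear_def by blast
  then show "F (xs @ smM c x # ys) = c * F (xs @ x # ys)" by (simp only: u)
qed

lemma multilinear_two_slots:
  assumes "multilinear m F" "length xs + length ys + 2 = m"
  shows "cbil smM smM (*) (\<lambda>u v. F (xs @ u # v # ys))"
proof -
  have l: "length xs + length (v # ys) + 1 = m" "length (xs @ [u]) + length ys + 1 = m" for u v
    using assms(2) by auto
  show ?thesis
    unfolding cbil_iff using multilinear_slot[OF assms(1) l(1)] multilinear_slot[OF assms(1) l(2)] by simp
qed

lemma multilinear_append:
  assumes "multilinear (Suc m) F"
  shows "multilinear m (\<lambda>xs. F (xs @ [v]))"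
  unfolding multilinear_def
proof (intro allI impI)
  fix xs :: "'m list" and i assume l: "length xs = m" "i < m"
  have u: "\<And>z. (xs @ [v])[i := z] = xs[i := z] @ [v]" using l by (simp add: list_update_append1)
  have "length (xs @ [v]) = Suc m" "i < Suc m" using l by auto
  with assms show "(\<forall>x y. F (xs[i := x + y] @ [v]) = F (xs[i := x] @ [v]) + F (xs[i := y] @ [v])) \<and>
       (\<forall>c x. F (xs[i := smM c x] @ [v]) = c * F (xs[i := x] @ [v]))"
    unfolding multilinear_def u[symmetric] by blast
qed

lemma multilinear_sweedler:
  assumes "\<And>ys. multilinear m (\<lambda>xs. G xs ys)"
  shows "multilinear m (\<lambda>xs. sweedler n b (G xs))"
  unfolding multilinear_def
proof (intro allI impI conjI)
  fix xs :: "'m list" and i x y c assume l: "length xs = m" "i < m"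
  have "sweedler n b (G (xs[i := x + y])) = sweedler n b (\<lambda>ys. G (xs[i := x]) ys + G (xs[i := y]) ys)"
    by (rule sweedler_cong) (use assms l in \<open>auto simp: multilinear_def\<close>)
  then show "sweedler n b (G (xs[i := x + y])) = sweedler n b (G (xs[i := x])) + sweedler n b (G (xs[i := y]))"
    by (simp add: sweedler_add)
  have "sweedler n b (G (xs[i := smM c x])) = sweedler n b (\<lambda>ys. c * G (xs[i := x]) ys)"
    by (rule sweedler_cong) (use assms l in \<open>auto simp: multilinear_def\<close>)
  then show "sweedler n b (G (xs[i := smM c x])) = c * sweedler n b (G (xs[i := x]))"
    by (simp add: sweedler_const_mult)
qed

lemma multilinear_swap_slots:
  assumes "multilinear k F" "Suc i < k"
  shows "multilinear k (\<lambda>xs. F (swap_slots i xs))"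
  unfolding multilinear_def
proof (intro allI impI)
  fix xs :: "'m list" and j assume l: "length xs = k" "j < k"
  let ?j = "if j = i then Suc i else if j = Suc i then i else j"
  have "length (swap_slots i xs) = k" "?j < k" using l assms(2) by (auto simp: swap_slots_def)
  with assms(1) show "(\<forall>x y. F (swap_slots i (xs[j := x + y])) = F (swap_slots i (xs[j := x])) + F (swap_slots i (xs[j := y]))) \<and>
        (\<forall>c x. F (swap_slots i (xs[j := smM c x])) = c * F (swap_slots i (xs[j := x])))"
    unfolding swap_slots_list_update[OF assms(2)[folded l(1)] l(2)[folded l(1)]] multilinear_def by blast
qed

lemma multilinear_swap_slots_seq:
  "multilinear k F \<Longrightarrow> \<forall>i\<in>set is. Suc i < k \<Longrightarrow> multilinear k (\<lambda>xs. F (swap_slots_seq is xs))"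
proof (induction "is" arbitrary: F)
  case (Cons i "is")
  then show ?case using multilinear_swap_slots[of k "\<lambda>xs. F (swap_slots_seq is xs)" i] by simp
qed simp

lemma sweedler_last_slot_linear:
  assumes "multilinear (Suc (Suc n)) F"
  shows "sweedler n u (\<lambda>xs. F (xs @ [x+y])) = sweedler n u (\<lambda>xs. F (xs @ [x])) + sweedler n u (\<lambda>xs. F (xs @ [y]))"
    and "sweedler n u (\<lambda>xs. F (xs @ [smM c x])) = c * sweedler n u (\<lambda>xs. F (xs @ [x]))"
proof -
  show "sweedler n u (\<lambda>xs. F (xs @ [x+y])) = sweedler n u (\<lambda>xs. F (xs @ [x])) + sweedler n u (\<lambda>xs. F (xs @ [y]))"
    unfolding sweedler_add[symmetric]
    by (rule sweedler_cong) (use multilinear_slot(1)[OF assms, where ys="[]"] in auto)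
  show "sweedler n u (\<lambda>xs. F (xs @ [smM c x])) = c * sweedler n u (\<lambda>xs. F (xs @ [x]))"
    unfolding sweedler_const_mult[symmetric]
    by (rule sweedler_cong) (use multilinear_slot(2)[OF assms, where ys="[]"] in auto)
qed

lemma sweedler_linear:
  assumes "multilinear (Suc n) F"
  shows "sweedler n (x+y) F = sweedler n x F + sweedler n y F \<and> sweedler n (smM c x) F = c * sweedler n x F"
  using assms
proof (induction n arbitrary: F x y c)
  case 0
  have "F ([x][0 := x+y]) = F ([x][0 := x]) + F ([x][0 := y])" "F ([x][0 := smM c x]) = c * F ([x][0 := x])"
    using 0 unfolding multilinear_def by (auto dest: spec[of _ "[x]"])
  then show ?case by simp
next
  case (Suc n)
  have "cbil smM smM (*) (\<lambda>u v. sweedler n u (\<lambda>xs. F (xs @ [v])))"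
    unfolding cbil_iff
    using Suc.IH[OF multilinear_append[OF Suc.prems]] sweedler_last_slot_linear[OF Suc.prems] by simp
  then show ?case
    by (simp only: sweedler_Suc coproduct_add coproduct_scale)
qed

lemma cbil_sweedler_append:
  assumes "multilinear (Suc (Suc n)) F"
  shows "cbil smM smM (*) (\<lambda>u v. sweedler n u (\<lambda>xs. F (xs @ [v])))"
  unfolding cbil_iff
  using sweedler_linear[OF multilinear_append[OF assms]] sweedler_last_slot_linear[OF assms] by simp

lemma sweedler_mult:
  assumes "multilinear (Suc n) F"
  shows "sweedler n (a*b) F = sweedler n a (\<lambda>xs. sweedler n b (\<lambda>ys. F (map2 (*) xs ys)))"
  using assms
proof (induction n arbitrary: F a b)
  case (Suc n)
  have "sweedler (Suc n) (a*b) F =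
      (\<Sum>(a1,a2)\<leftarrow>\<Delta> a. \<Sum>(b1,b2)\<leftarrow>\<Delta> b. sweedler n (a1*b1) (\<lambda>xs. F (xs @ [a2*b2])))"
    unfolding sweedler_Suc by (rule coproduct_mult[OF cbil_sweedler_append[OF Suc.prems]])
  also have "\<dots> = (\<Sum>(a1,a2)\<leftarrow>\<Delta> a. \<Sum>(b1,b2)\<leftarrow>\<Delta> b.
      sweedler n a1 (\<lambda>xs. sweedler n b1 (\<lambda>ys. F (map2 (*) xs ys @ [a2*b2]))))"
    using Suc.IH[OF multilinear_append[OF Suc.prems]] by simp
  also have "\<dots> = (\<Sum>(a1,a2)\<leftarrow>\<Delta> a. sweedler n a1 (\<lambda>xs. \<Sum>(b1,b2)\<leftarrow>\<Delta> b.
      sweedler n b1 (\<lambda>ys. F (map2 (*) (xs @ [a2]) (ys @ [b2])))))"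
  proof -
    have "sweedler n a1 (\<lambda>xs. \<Sum>(b1,b2)\<leftarrow>\<Delta> b. sweedler n b1 (\<lambda>ys. F (map2 (*) (xs@[a2]) (ys@[b2])))) =
        sweedler n a1 (\<lambda>xs. \<Sum>(b1,b2)\<leftarrow>\<Delta> b. sweedler n b1 (\<lambda>ys. F (map2 (*) xs ys @ [a2*b2])))" for a1 a2
      by (intro sweedler_cong arg_cong[where f=sum_list] map_cong refl) (auto intro!: sweedler_cong)
    then show ?thesis by (simp only: sweedler_sum_pairs)
  qed
  also have "\<dots> = sweedler (Suc n) a (\<lambda>xs. sweedler (Suc n) b (\<lambda>ys. F (map2 (*) xs ys)))"
    by (simp add: sweedler_Suc)
  finally show ?case .
qed simp

definition coproduct_at :: "nat \<Rightarrow> ('m list \<Rightarrow> complex) \<Rightarrow> 'm list \<Rightarrow> complex" where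
  "coproduct_at i F xs = (\<Sum>(u,v)\<leftarrow>\<Delta> (xs!i). F (take i xs @ [u,v] @ drop (Suc i) xs))"

lemma coproduct_at_middle:
  "length ys = i \<Longrightarrow> coproduct_at i F (ys @ w # zs) = (\<Sum>(u,v)\<leftarrow>\<Delta> w. F (ys @ u # v # zs))"
  by (simp add: coproduct_at_def nth_append)

lemma coproduct_at_0_Cons: "coproduct_at 0 F (w # zs) = (\<Sum>(u,v)\<leftarrow>\<Delta> w. F (u # v # zs))"
  by (simp add: coproduct_at_def)

lemma coproduct_at_Suc_Cons: "coproduct_at (Suc i) F (x # xs) = coproduct_at i (\<lambda>ys. F (x # ys)) xs"
  by (simp add: coproduct_at_def)

lemma ctril_sweedler_append2:
  assumes "multilinear (Suc (Suc (Suc n))) F"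
  shows "ctril smM smM smM (\<lambda>p q w. sweedler n p (\<lambda>xs. F (xs @ [q, w])))"
proof -
  have lin: "multilinear (Suc n) (\<lambda>xs. F (xs @ [q, w]))" for q w
    using multilinear_append[OF multilinear_append[OF assms], of q w] by simp
  have bil: "cbil smM smM (*) (\<lambda>u v. F (xs @ [u, v]))" if "length xs = Suc n" for xs
    using multilinear_two_slots[OF assms, of xs "[]"] that by simp
  have "sweedler n z (\<lambda>xs. F (xs @ [x + y, w])) = sweedler n z (\<lambda>xs. F (xs @ [x, w]) + F (xs @ [y, w]))"
       "sweedler n z (\<lambda>xs. F (xs @ [w, x + y])) = sweedler n z (\<lambda>xs. F (xs @ [w, x]) + F (xs @ [w, y]))"
       "sweedler n z (\<lambda>xs. F (xs @ [smM c x, w])) = sweedler n z (\<lambda>xs. c * F (xs @ [x, w]))"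
       "sweedler n z (\<lambda>xs. F (xs @ [w, smM c x])) = sweedler n z (\<lambda>xs. c * F (xs @ [w, x]))"
    for x y z w c
    by (rule sweedler_cong; use bil in \<open>simp add: cbil_iff\<close>)+
  then show ?thesis
    unfolding ctril_iff using sweedler_linear[OF lin] by (simp add: sweedler_add sweedler_const_mult)
qed

text \<open>Generalised coassociativity: splitting any one factor of \<open>\<Delta>\<^sup>n a\<close> gives \<open>\<Delta>\<^sup>n\<^sup>+\<^sup>1 a\<close>.\<close>

lemma sweedler_coproduct_at:
  assumes "multilinear (Suc (Suc n)) F" "i \<le> n"
  shows "sweedler (Suc n) a F = sweedler n a (coproduct_at i F)"
  using assms
proof (induction n arbitrary: a F i)
  case 0
  then show ?case by (simp add: sweedler_Suc coproduct_at_def)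
next
  case (Suc n)
  have "sweedler (Suc (Suc n)) a F = (\<Sum>(x,y)\<leftarrow>\<Delta> a. sweedler (Suc n) x (\<lambda>xs. F (xs @ [y])))"
    by (rule sweedler_Suc)
  also have "\<dots> = (\<Sum>(x,y)\<leftarrow>\<Delta> a. sweedler n x (\<lambda>xs. coproduct_at i F (xs @ [y])))"
  proof (cases "i \<le> n")
    case True
    have "sweedler (Suc n) x (\<lambda>xs. F (xs @ [y])) = sweedler n x (coproduct_at i (\<lambda>xs. F (xs @ [y])))" for x y
      using Suc.IH[OF multilinear_append[OF Suc.prems(1)] True] .
    also have "\<dots> x y = sweedler n x (\<lambda>xs. coproduct_at i F (xs @ [y]))" for x y
      by (rule sweedler_cong) (use True in \<open>simp add: coproduct_at_def nth_append\<close>)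
    finally show ?thesis by simp
  next
    case False
    then have i: "i = Suc n" using Suc.prems(2) by simp
    have "(\<Sum>(x,y)\<leftarrow>\<Delta> a. sweedler (Suc n) x (\<lambda>xs. F (xs @ [y]))) =
        (\<Sum>(x,y)\<leftarrow>\<Delta> a. \<Sum>(x1,x2)\<leftarrow>\<Delta> x. sweedler n x1 (\<lambda>xs. F (xs @ [x2, y])))"
      by (simp add: sweedler_Suc)
    also have "\<dots> = (\<Sum>(x,y)\<leftarrow>\<Delta> a. \<Sum>(y1,y2)\<leftarrow>\<Delta> y. sweedler n x (\<lambda>xs. F (xs @ [y1, y2])))"
      by (rule coproduct_coassoc[OF ctril_sweedler_append2[OF Suc.prems(1)]])
    also have "\<dots> = (\<Sum>(x,y)\<leftarrow>\<Delta> a. sweedler n x (\<lambda>xs. \<Sum>(y1,y2)\<leftarrow>\<Delta> y. F (xs @ [y1, y2])))"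
      by (simp only: sweedler_sum_pairs)
    also have "\<dots> = (\<Sum>(x,y)\<leftarrow>\<Delta> a. sweedler n x (\<lambda>xs. coproduct_at i F (xs @ [y])))"
      by (intro arg_cong[where f=sum_list] map_cong refl)
         (auto intro!: sweedler_cong simp: i coproduct_at_def nth_append)
    finally show ?thesis .
  qed
  also have "\<dots> = sweedler (Suc n) a (coproduct_at i F)"
    by (simp add: sweedler_Suc)
  finally show ?case .
qed

lemma split_list_at:
  assumes "i < length xs"
  obtains ys w zs where "xs = ys @ w # zs" "length ys = i"
  using assms id_take_nth_drop[OF assms] by (metis length_take min.absorb4)

lemma multilinear_coproduct_at:
  assumes lin: "multilinear (Suc (Suc n)) F" and i: "i \<le> n"
  shows "multilinear (Suc n) (coproduct_at i F)"
  unfolding multilinear_def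
proof (intro allI impI)
  fix xs :: "'m list" and j assume l: "length xs = Suc n" "j < Suc n"
  obtain ys w zs where xs: "xs = ys @ w # zs" and ys: "length ys = i"
    using split_list_at[of i xs] l i by auto
  have lz: "length ys + length zs + 1 = Suc n" using l xs by simp
  have slot: "\<And>zs'. length zs' = Suc (Suc n) \<Longrightarrow> k < Suc (Suc n) \<Longrightarrow>
     F (zs'[k := x + y]) = F (zs'[k := x]) + F (zs'[k := y]) \<and> F (zs'[k := smM c x]) = c * F (zs'[k := x])"
    for k x y c
    using lin unfolding multilinear_def by blast
  show "(\<forall>x y. coproduct_at i F (xs[j := x + y]) = coproduct_at i F (xs[j := x]) + coproduct_at i F (xs[j := y])) \<and>
        (\<forall>c x. coproduct_at i F (xs[j := smM c x]) = c * coproduct_at i F (xs[j := x]))"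
  proof (cases j i rule: linorder_cases)
    case less
    have e: "xs[j := z] = ys[j := z] @ w # zs" for z using xs less ys by (simp add: list_update_append1)
    have e2: "ys[j := z] @ u # v # zs = (ys @ u # v # zs)[j := z]" for z u v using less ys
      by (simp add: list_update_append1)
    have "length (ys @ u # v # zs) = Suc (Suc n)" "j < Suc (Suc n)" for u v using lz less ys by auto
    then show ?thesis unfolding e coproduct_at_middle[OF length_list_update[of ys j, unfolded ys]] e2
      using slot by (simp add: sum_list_addf sum_list_const_mult split_def)
  next
    case equal
    have e: "xs[j := z] = ys @ z # zs" for z using xs equal ys by (simp add: list_update_append)
    have "cbil smM smM (*) (\<lambda>u v. F (ys @ u # v # zs))" using multilinear_two_slots[OF lin] lz by simp
    then show ?thesis unfolding e coproduct_at_middle[OF ys] using coproduct_add coproduct_scale by simp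
  next
    case greater
    have e: "xs[j := z] = ys @ w # zs[j - Suc i := z]" for z using xs greater ys
      by (simp add: list_update_append split: nat.split) (metis Suc_diff_Suc nat.inject)
    have jj: "Suc j = Suc (Suc (length ys + (j - Suc i)))" using greater ys by simp
    have e2: "ys @ u # v # zs[j - Suc i := z] = (ys @ u # v # zs)[Suc j := z]" for z u v
      unfolding jj by (simp add: list_update_append)
    have "length (ys @ u # v # zs) = Suc (Suc n)" "Suc j < Suc (Suc n)" for u v using lz l by auto
    then show ?thesis unfolding e coproduct_at_middle[OF ys] e2
      using slot by (simp add: sum_list_addf sum_list_const_mult split_def)
  qed
qed

lemma sweedler_swap_slots:
  assumes lin: "multilinear (Suc (Suc n)) F" and i: "i \<le> n"
  shows "sweedler (Suc n) a (\<lambda>xs. F (swap_slots i xs)) = sweedler (Suc n) a F"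
proof -
  have "multilinear (Suc (Suc n)) (\<lambda>xs. F (swap_slots i xs))"
    using multilinear_swap_slots[OF lin] i by simp
  then have "sweedler (Suc n) a (\<lambda>xs. F (swap_slots i xs)) =
      sweedler n a (coproduct_at i (\<lambda>xs. F (swap_slots i xs)))"
    using i by (rule sweedler_coproduct_at)
  also have "\<dots> = sweedler n a (coproduct_at i F)"
  proof (rule sweedler_cong)
    fix xs :: "'m list" assume l: "length xs = Suc n"
    obtain ys w zs where xs: "xs = ys @ w # zs" and ys: "length ys = i"
      using split_list_at[of i xs] l i by auto
    have "cbil smM smM (*) (\<lambda>u v. F (ys @ v # u # zs))"
      using multilinear_two_slots[OF lin, of ys zs] l xs unfolding cbil_iff by simp
    then show "coproduct_at i (\<lambda>xs. F (swap_slots i xs)) xs = coproduct_at i F xs"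
      unfolding xs coproduct_at_middle[OF ys] swap_slots_middle[OF ys] by (rule coproduct_cocomm)
  qed
  also have "\<dots> = sweedler (Suc n) a F"
    using lin i by (rule sweedler_coproduct_at[symmetric])
  finally show ?thesis .
qed

lemma sweedler_swap_slots_seq:
  "multilinear (Suc (Suc n)) F \<Longrightarrow> \<forall>i\<in>set is. i \<le> n \<Longrightarrow>
   sweedler (Suc n) a (\<lambda>xs. F (swap_slots_seq is xs)) = sweedler (Suc n) a F"
proof (induction "is" arbitrary: F)
  case (Cons i "is")
  have "multilinear (Suc (Suc n)) (\<lambda>xs. F (swap_slots_seq is xs))"
    using multilinear_swap_slots_seq[OF Cons.prems(1)] Cons.prems(2) by (simp add: less_Suc_eq_le)
  then show ?case
    using sweedler_swap_slots[of n "\<lambda>xs. F (swap_slots_seq is xs)" i a] Cons by simp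
qed simp

end

locale bichar_pairing = cocomm_hopf smM \<Delta> \<eta> S
  for smM :: "complex \<Rightarrow> 'm::comm_ring_1 \<Rightarrow> 'm" and \<Delta> \<eta> S +
  fixes smA :: "complex \<Rightarrow> 'a::comm_ring_1 \<Rightarrow> 'a" and r s1 :: "'m \<Rightarrow> 'm \<Rightarrow> 'a"
    and \<phi> :: "'m \<Rightarrow> 'a \<Rightarrow> complex"
  assumes calg_A: "calg smA" and bichar_r: "bichar smM smA \<Delta> \<eta> r" and bichar_s1: "bichar smM smA \<Delta> \<eta> s1"
    and cbil_\<phi>: "cbil smM smA (*) \<phi>"
begin

lemma \<phi>_linear [simp]:
  "\<phi> (x+y) \<alpha> = \<phi> x \<alpha> + \<phi> y \<alpha>" "\<phi> (smM c x) \<alpha> = c * \<phi> x \<alpha>"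
  "\<phi> x (\<alpha>+\<beta>) = \<phi> x \<alpha> + \<phi> x \<beta>" "\<phi> x (smA c \<alpha>) = c * \<phi> x \<alpha>"
  using cbil_\<phi> unfolding cbil_def clin_def by auto

lemma r_linear [simp]:
  "r (x+y) z = r x z + r y z" "r (smM c x) z = smA c (r x z)"
  "r z (x+y) = r z x + r z y" "r z (smM c x) = smA c (r z x)"
  using bichar_r unfolding bichar_def cbil_def clin_def by auto

lemma s1_linear [simp]:
  "s1 (x+y) z = s1 x z + s1 y z" "s1 (smM c x) z = smA c (s1 x z)"
  "s1 z (x+y) = s1 z x + s1 z y" "s1 z (smM c x) = smA c (s1 z x)"
  using bichar_s1 unfolding bichar_def cbil_def clin_def by auto

lemma smA_mult [simp]: "smA c x * y = smA c (x * y)" "y * smA c x = smA c (y * x)"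
  using calg_A unfolding calg_def by (metis mult.commute)+

lemma smM_mult [simp]: "smM c x * y = smM c (x * y)" "y * smM c x = smM c (y * x)"
  using hopf unfolding cc_hopf_def calg_def by (metis mult.commute)+

lemma \<phi>_zero [simp]: "\<phi> m 0 = 0"
  using \<phi>_linear(3)[of m 0 0] by simp

lemma \<phi>_sum_list_pairs [simp]: "\<phi> m (\<Sum>(u,v)\<leftarrow>L. f u v) = (\<Sum>(u,v)\<leftarrow>L. \<phi> m (f u v))"
  by (induction L) auto

lemma r_mult_left: "r (a*b) c = (\<Sum>(c1, c2)\<leftarrow>\<Delta> c. r a c1 * r b c2)"
  and r_mult_right: "r a (b*c) = (\<Sum>(a1, a2)\<leftarrow>\<Delta> a. r a1 b * r a2 c)"
  using bichar_r unfolding bichar_def by auto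

abbreviation s2 :: "'m \<Rightarrow> 'm \<Rightarrow> 'a" where
  "s2 \<equiv> conv \<Delta> (symmetrization \<Delta> r) s1"

lemma s2_eq_sum:
  "s2 u v = (\<Sum>(a1,a2)\<leftarrow>\<Delta> u. \<Sum>(p,q)\<leftarrow>\<Delta> a1. \<Sum>(b1,b2)\<leftarrow>\<Delta> v. \<Sum>(p',q')\<leftarrow>\<Delta> b1.
    r p p' * r q' q * s1 a2 b2)"
proof -
  have "s2 u v = (\<Sum>(a1,a2)\<leftarrow>\<Delta> u. \<Sum>(b1,b2)\<leftarrow>\<Delta> v. \<Sum>(p,q)\<leftarrow>\<Delta> a1. \<Sum>(p',q')\<leftarrow>\<Delta> b1.
    r p p' * r q' q * s1 a2 b2)"
    by (simp add: conv_eq_sum symmetrization_def transp_def sum_list_pairs_mult_const)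
  then show ?thesis by (simp only: sum_list_commute_pairs[where xs="\<Delta> v"])
qed

text \<open>The integrands below are the pairings under \<open>\<phi>\<close> of the two sides, written over
  \<open>\<Delta>\<^sup>k a \<otimes> \<Delta>\<^sup>k b\<close> for increasing \<open>k\<close>; list positions are tensor factors.\<close>

definition eq_pairing :: "'a \<Rightarrow> 'm list \<Rightarrow> complex" where
  "eq_pairing c xs = \<phi> (xs!2) (r (xs!0) (xs!1) * c)"

definition lhs_integrand3 :: "'m list \<Rightarrow> 'm list \<Rightarrow> complex" where
  "lhs_integrand3 X Y = \<phi> (X!2 * Y!2) (r (X!0 * Y!0) (X!1 * Y!1) * s1 (X!3) (Y!3))"

definition lhs_integrand :: "'m list \<Rightarrow> 'm list \<Rightarrow> complex" where
  "lhs_integrand X Y =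
     \<phi> (X!4 * Y!4) (r (X!0) (X!2) * r (X!1) (Y!2) * r (Y!0) (X!3) * r (Y!1) (Y!3) * s1 (X!5) (Y!5))"

definition rhs_integrand2 :: "'m list \<Rightarrow> 'm list \<Rightarrow> complex" where
  "rhs_integrand2 xs ys = (\<Sum>(u1,u2)\<leftarrow>\<Delta> (xs!2). \<Sum>(v1,v2)\<leftarrow>\<Delta> (ys!2).
      \<phi> (u1*v1) (s2 u2 v2 * (r (xs!0) (xs!1) * r (ys!0) (ys!1))))"

definition rhs_integrand :: "'m list \<Rightarrow> 'm list \<Rightarrow> complex" where
  "rhs_integrand X Y =
     \<phi> (X!2 * Y!2) (r (X!0) (X!1) * r (Y!0) (Y!1) * r (X!3) (Y!3) * r (Y!4) (X!4) * s1 (X!5) (Y!5))"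

lemma multilinear_eq_pairing: "multilinear 3 (eq_pairing c)"
  unfolding multilinear_def
  by (auto simp: eq_pairing_def ring_distribs numeral_eq_Suc less_Suc_eq dest!: length_3_cases)

lemma multilinear_lhs_integrand: "multilinear 6 (\<lambda>X. lhs_integrand X Y)" "multilinear 6 (lhs_integrand X)"
  unfolding multilinear_def
  by (auto simp: lhs_integrand_def ring_distribs numeral_eq_Suc less_Suc_eq dest!: length_6_cases)

lemma multilinear_rhs_integrand: "multilinear 6 (\<lambda>X. rhs_integrand X Y)" "multilinear 6 (rhs_integrand X)"
  unfolding multilinear_def
  by (auto simp: rhs_integrand_def ring_distribs numeral_eq_Suc less_Suc_eq dest!: length_6_cases)

lemma lhs_unfold:
  "(\<Sum>(x,y)\<leftarrow>EQA \<Delta> r (bulletM \<Delta> s1 a b). \<phi> x y) =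
   (\<Sum>(a1,a2)\<leftarrow>\<Delta> a. \<Sum>(b1,b2)\<leftarrow>\<Delta> b. sweedler 2 (a1*b1) (eq_pairing (s1 a2 b2)))"
  by (simp add: EQA_def bulletM_def EQ_def eq_pairing_def sweedler_Suc numeral_eq_Suc
      sum_list_concat map_concat comp_def split_def)

lemma rhs_unfold:
  "(\<Sum>(x,y)\<leftarrow>bulletA \<Delta> s2 (EQ \<Delta> r a) (EQ \<Delta> r b). \<phi> x y) =
   sweedler 2 a (\<lambda>xs. sweedler 2 b (rhs_integrand2 xs))"
  by (simp add: bulletA_def bulletM_def EQ_def rhs_integrand2_def sweedler_Suc numeral_eq_Suc
      sum_list_concat map_concat comp_def split_def)

lemma lhs_integrand3_append:
  "length xs = 3 \<Longrightarrow> length ys = 3 \<Longrightarrow>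
   lhs_integrand3 (xs @ [a2]) (ys @ [b2]) = eq_pairing (s1 a2 b2) (map2 (*) xs ys)"
  by (auto simp: lhs_integrand3_def eq_pairing_def dest!: length_3_cases)

lemma lhs_eq_sweedler3:
  "(\<Sum>(a1,a2)\<leftarrow>\<Delta> a. \<Sum>(b1,b2)\<leftarrow>\<Delta> b. sweedler 2 (a1*b1) (eq_pairing (s1 a2 b2))) =
   sweedler 3 a (\<lambda>X. sweedler 3 b (lhs_integrand3 X))"
proof -
  have lin: "multilinear (Suc 2) (eq_pairing c)" for c
    using multilinear_eq_pairing by simp
  have "(\<Sum>(b1,b2)\<leftarrow>\<Delta> b. sweedler 2 (a1*b1) (eq_pairing (s1 a2 b2))) =
      sweedler 2 a1 (\<lambda>xs. \<Sum>(b1,b2)\<leftarrow>\<Delta> b. sweedler 2 b1 (\<lambda>ys. lhs_integrand3 (xs @ [a2]) (ys @ [b2])))"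
    for a1 a2
    unfolding sweedler_mult[OF lin] sweedler_sum_pairs
    by (intro arg_cong[where f=sum_list] map_cong refl)
       (auto intro!: sweedler_cong simp: lhs_integrand3_append)
  moreover have "sweedler 3 x F = (\<Sum>(x1,x2)\<leftarrow>\<Delta> x. sweedler 2 x1 (\<lambda>xs. F (xs @ [x2])))" for x F
    using sweedler_Suc[of 2 x F] by (simp add: numeral_3_eq_3)
  ultimately show ?thesis
    by simp
qed

lemma lhs_integrand_coproducts:
  "(\<Sum>(u,v)\<leftarrow>\<Delta> x1. \<Sum>(p,q)\<leftarrow>\<Delta> x0. \<Sum>(u',v')\<leftarrow>\<Delta> y1. \<Sum>(p',q')\<leftarrow>\<Delta> y0.
     lhs_integrand [p,q,u,v,x2,x3] [p',q',u',v',y2,y3]) = lhs_integrand3 [x0,x1,x2,x3] [y0,y1,y2,y3]"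
proof -
  let ?\<psi> = "\<lambda>c1 c2. \<phi> (x2*y2) (r x0 c1 * r y0 c2 * s1 x3 y3)"
  have "cbil smM smM (*) ?\<psi>" unfolding cbil_iff by (simp add: ring_distribs)
  then have "lhs_integrand3 [x0,x1,x2,x3] [y0,y1,y2,y3] = (\<Sum>(u,v)\<leftarrow>\<Delta> x1. \<Sum>(u',v')\<leftarrow>\<Delta> y1. ?\<psi> (u*u') (v*v'))"
    by (simp add: lhs_integrand3_def r_mult_left sum_list_pairs_mult_const coproduct_mult)
  also have "\<dots> = (\<Sum>(u,v)\<leftarrow>\<Delta> x1. \<Sum>(u',v')\<leftarrow>\<Delta> y1. \<Sum>(p',q')\<leftarrow>\<Delta> y0. \<Sum>(p,q)\<leftarrow>\<Delta> x0.
      lhs_integrand [p,q,u,v,x2,x3] [p',q',u',v',y2,y3])"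
    by (simp add: lhs_integrand_def r_mult_right sum_list_pairs_mult_const sum_list_pairs_const_mult mult_ac)
  also have "\<dots> = (\<Sum>(u,v)\<leftarrow>\<Delta> x1. \<Sum>(p,q)\<leftarrow>\<Delta> x0. \<Sum>(u',v')\<leftarrow>\<Delta> y1. \<Sum>(p',q')\<leftarrow>\<Delta> y0.
      lhs_integrand [p,q,u,v,x2,x3] [p',q',u',v',y2,y3])"
    by (simp only: sum_list_commute_pairs[where xs="\<Delta> y0" and ys="\<Delta> x0"]
                   sum_list_commute_pairs[where xs="\<Delta> y1" and ys="\<Delta> x0"])
  finally show ?thesis by simp
qed

lemma lhs_sweedler3_eq_sweedler5:
  "sweedler 3 a (\<lambda>X. sweedler 3 b (lhs_integrand3 X)) = sweedler 5 a (\<lambda>X. sweedler 5 b (lhs_integrand X))"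
proof -
  have split: "sweedler 5 c F = sweedler 3 c (coproduct_at 1 (coproduct_at 0 F))"
    if "multilinear 6 F" for c F
  proof -
    have lin6: "multilinear (Suc (Suc 4)) F" using that by simp
    have lin5: "multilinear (Suc (Suc 3)) (coproduct_at 0 F)"
      using multilinear_coproduct_at[OF lin6, of 0] by simp
    show ?thesis
      using sweedler_coproduct_at[OF lin6, of 0 c] sweedler_coproduct_at[OF lin5, of 1 c] by simp
  qed
  have inner: "sweedler 5 b (lhs_integrand X) = sweedler 3 b (coproduct_at 1 (coproduct_at 0 (lhs_integrand X)))"
    for X by (rule split[OF multilinear_lhs_integrand(2)])
  have "sweedler 5 a (\<lambda>X. sweedler 5 b (lhs_integrand X)) =
      sweedler 3 a (coproduct_at 1 (coproduct_at 0 (\<lambda>X. sweedler 5 b (lhs_integrand X))))"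
    by (rule split[OF multilinear_sweedler[OF multilinear_lhs_integrand(1)]])
  also have "\<dots> = sweedler 3 a (\<lambda>X. sweedler 3 b (lhs_integrand3 X))"
  proof (rule sweedler_cong)
    fix xs :: "'m list" assume "length xs = Suc 3"
    then obtain x0 x1 x2 x3 where xs: "xs = [x0,x1,x2,x3]" using length_4_cases[of xs] by auto
    have "coproduct_at 1 (coproduct_at 0 (\<lambda>X. sweedler 5 b (lhs_integrand X))) xs =
        sweedler 3 b (\<lambda>ys. \<Sum>(u,v)\<leftarrow>\<Delta> x1. \<Sum>(p,q)\<leftarrow>\<Delta> x0.
          coproduct_at 1 (coproduct_at 0 (lhs_integrand [p,q,u,v,x2,x3])) ys)"
      unfolding xs inner
      by (simp add: coproduct_at_0_Cons coproduct_at_Suc_Cons sweedler_sum_pairs)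
    also have "\<dots> = sweedler 3 b (lhs_integrand3 xs)"
      by (rule sweedler_cong)
         (auto dest!: length_4_cases simp: xs coproduct_at_0_Cons coproduct_at_Suc_Cons lhs_integrand_coproducts[symmetric])
    finally show "coproduct_at 1 (coproduct_at 0 (\<lambda>X. sweedler 5 b (lhs_integrand X))) xs =
        sweedler 3 b (lhs_integrand3 xs)" .
  qed
  finally show ?thesis ..
qed

lemma rhs_integrand_coproducts:
  "(\<Sum>(u,w)\<leftarrow>\<Delta> x2. \<Sum>(w1,w2)\<leftarrow>\<Delta> w. \<Sum>(p,q)\<leftarrow>\<Delta> w1.
    \<Sum>(u',w')\<leftarrow>\<Delta> y2. \<Sum>(w1',w2')\<leftarrow>\<Delta> w'. \<Sum>(p',q')\<leftarrow>\<Delta> w1'.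
      rhs_integrand [x0,x1,u,p,q,w2] [y0,y1,u',p',q',w2']) = rhs_integrand2 [x0,x1,x2] [y0,y1,y2]"
proof -
  have "rhs_integrand2 [x0,x1,x2] [y0,y1,y2] =
    (\<Sum>(u,w)\<leftarrow>\<Delta> x2. \<Sum>(u',w')\<leftarrow>\<Delta> y2. \<Sum>(w1,w2)\<leftarrow>\<Delta> w. \<Sum>(p,q)\<leftarrow>\<Delta> w1.
      \<Sum>(w1',w2')\<leftarrow>\<Delta> w'. \<Sum>(p',q')\<leftarrow>\<Delta> w1'. rhs_integrand [x0,x1,u,p,q,w2] [y0,y1,u',p',q',w2'])"
    by (simp add: rhs_integrand2_def s2_eq_sum sum_list_pairs_mult_const) (simp add: rhs_integrand_def mult_ac)
  then show ?thesis
    by (simp only: sum_list_commute_pairs[where xs="\<Delta> y2"])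
qed

lemma rhs_sweedler2_eq_sweedler5:
  "sweedler 2 a (\<lambda>xs. sweedler 2 b (rhs_integrand2 xs)) = sweedler 5 a (\<lambda>X. sweedler 5 b (rhs_integrand X))"
proof -
  have split: "sweedler 5 c F = sweedler 2 c (coproduct_at 2 (coproduct_at 3 (coproduct_at 3 F)))"
    if "multilinear 6 F" for c F
  proof -
    have lin6: "multilinear (Suc (Suc 4)) F" using that by simp
    have lin5: "multilinear (Suc (Suc 3)) (coproduct_at 3 F)"
      using multilinear_coproduct_at[OF lin6, of 3] by simp
    have lin4: "multilinear (Suc (Suc 2)) (coproduct_at 3 (coproduct_at 3 F))"
      using multilinear_coproduct_at[OF lin5, of 3] by simp
    show ?thesis
      using sweedler_coproduct_at[OF lin6, of 3 c] sweedler_coproduct_at[OF lin5, of 3 c]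
        sweedler_coproduct_at[OF lin4, of 2 c] by simp
  qed
  have inner: "sweedler 5 b (rhs_integrand X) = sweedler 2 b (coproduct_at 2 (coproduct_at 3 (coproduct_at 3 (rhs_integrand X))))"
    for X by (rule split[OF multilinear_rhs_integrand(2)])
  have "sweedler 5 a (\<lambda>X. sweedler 5 b (rhs_integrand X)) =
      sweedler 2 a (coproduct_at 2 (coproduct_at 3 (coproduct_at 3 (\<lambda>X. sweedler 5 b (rhs_integrand X)))))"
    by (rule split[OF multilinear_sweedler[OF multilinear_rhs_integrand(1)]])
  also have "\<dots> = sweedler 2 a (\<lambda>xs. sweedler 2 b (rhs_integrand2 xs))"
  proof (rule sweedler_cong)
    fix xs :: "'m list" assume "length xs = Suc 2"
    then obtain x0 x1 x2 where xs: "xs = [x0,x1,x2]" using length_3_cases[of xs] by auto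
    have "coproduct_at 2 (coproduct_at 3 (coproduct_at 3 (\<lambda>X. sweedler 5 b (rhs_integrand X)))) xs =
        sweedler 2 b (\<lambda>ys. \<Sum>(u,w)\<leftarrow>\<Delta> x2. \<Sum>(w1,w2)\<leftarrow>\<Delta> w. \<Sum>(p,q)\<leftarrow>\<Delta> w1.
          coproduct_at 2 (coproduct_at 3 (coproduct_at 3 (rhs_integrand [x0,x1,u,p,q,w2]))) ys)"
      unfolding xs inner
      by (simp add: coproduct_at_0_Cons coproduct_at_Suc_Cons numeral_eq_Suc sweedler_sum_pairs)
    also have "\<dots> = sweedler 2 b (rhs_integrand2 xs)"
    proof (rule sweedler_cong)
      fix ys :: "'m list" assume "length ys = Suc 2"
      then obtain y0 y1 y2 where ys: "ys = [y0,y1,y2]" using length_3_cases[of ys] by auto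
      show "(\<Sum>(u,w)\<leftarrow>\<Delta> x2. \<Sum>(w1,w2)\<leftarrow>\<Delta> w. \<Sum>(p,q)\<leftarrow>\<Delta> w1.
          coproduct_at 2 (coproduct_at 3 (coproduct_at 3 (rhs_integrand [x0,x1,u,p,q,w2]))) ys) =
          rhs_integrand2 xs ys"
        unfolding xs ys rhs_integrand_coproducts[symmetric]
        by (simp add: coproduct_at_0_Cons coproduct_at_Suc_Cons numeral_eq_Suc)
    qed
    finally show "coproduct_at 2 (coproduct_at 3 (coproduct_at 3 (\<lambda>X. sweedler 5 b (rhs_integrand X)))) xs =
        sweedler 2 b (rhs_integrand2 xs)" .
  qed
  finally show ?thesis ..
qed

lemma lhs_integrand_eq_rhs_integrand_swapped:
  "length X = 6 \<Longrightarrow> length Y = 6 \<Longrightarrow>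
   lhs_integrand X Y = rhs_integrand (swap_slots_seq [1,3,2] X) (swap_slots_seq [0,2,1,3,2,3] Y)"
  by (auto dest!: length_6_cases simp: lhs_integrand_def rhs_integrand_def swap_slots_def mult_ac)

lemma lhs_sweedler5_eq_rhs_sweedler5:
  "sweedler 5 a (\<lambda>X. sweedler 5 b (lhs_integrand X)) = sweedler 5 a (\<lambda>X. sweedler 5 b (rhs_integrand X))"
proof -
  let ?\<sigma> = "swap_slots_seq [1,3,2]" and ?\<tau> = "swap_slots_seq [0,2,1,3,2,3]"
  have "sweedler 5 b (lhs_integrand X) = sweedler 5 b (rhs_integrand (?\<sigma> X))" if "length X = 6" for X
  proof -
    have "sweedler 5 b (lhs_integrand X) = sweedler 5 b (\<lambda>Y. rhs_integrand (?\<sigma> X) (?\<tau> Y))"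
      by (rule sweedler_cong) (simp add: that lhs_integrand_eq_rhs_integrand_swapped)
    also have "\<dots> = sweedler 5 b (rhs_integrand (?\<sigma> X))"
      using sweedler_swap_slots_seq[of 4 "rhs_integrand (?\<sigma> X)" "[0,2,1,3,2,3]" b]
        multilinear_rhs_integrand(2) by simp
    finally show ?thesis .
  qed
  then have "sweedler 5 a (\<lambda>X. sweedler 5 b (lhs_integrand X)) =
      sweedler 5 a (\<lambda>X. sweedler 5 b (rhs_integrand (?\<sigma> X)))"
    by (rule sweedler_cong) simp
  also have "\<dots> = sweedler 5 a (\<lambda>X. sweedler 5 b (rhs_integrand X))"
    using sweedler_swap_slots_seq[of 4 "\<lambda>X. sweedler 5 b (rhs_integrand X)" "[1,3,2]" a]
      multilinear_sweedler[OF multilinear_rhs_integrand(1)] by simp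
  finally show ?thesis .
qed

lemma pairing_EQ_bullet:
  "(\<Sum>(x,y)\<leftarrow>EQA \<Delta> r (bulletM \<Delta> s1 a b). \<phi> x y) =
   (\<Sum>(x,y)\<leftarrow>bulletA \<Delta> s2 (EQ \<Delta> r a) (EQ \<Delta> r b). \<phi> x y)"
  unfolding lhs_unfold lhs_eq_sweedler3 lhs_sweedler3_eq_sweedler5 lhs_sweedler5_eq_rhs_sweedler5
    rhs_unfold rhs_sweedler2_eq_sweedler5 ..

end

theorem theorem2p9:
  fixes smM :: "complex \<Rightarrow> 'm::comm_ring_1 \<Rightarrow> 'm"
    and smA :: "complex \<Rightarrow> 'a::comm_ring_1 \<Rightarrow> 'a"
    and \<Delta> :: "'m \<Rightarrow> ('m \<times> 'm) list" and \<eta> :: "'m \<Rightarrow> complex" and S :: "'m \<Rightarrow> 'm"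
    and r s1 :: "'m \<Rightarrow> 'm \<Rightarrow> 'a"
  assumes "cc_hopf smM \<Delta> \<eta> S"
    and "calg smA"
    and "bichar smM smA \<Delta> \<eta> r"
    and "bichar smM smA \<Delta> \<eta> s1" and "symmetric_bichar s1"
  shows "\<forall>a b. teq2 smM smA
           (EQA \<Delta> r (bulletM \<Delta> s1 a b))
           (bulletA \<Delta> (conv \<Delta> (symmetrization \<Delta> r) s1) (EQ \<Delta> r a) (EQ \<Delta> r b))"
  unfolding teq2_def
proof (intro allI impI)
  fix a b and \<phi> :: "'m \<Rightarrow> 'a \<Rightarrow> complex"
  assume "cbil smM smA (*) \<phi>"
  then interpret bichar_pairing smM \<Delta> \<eta> S smA r s1 \<phi>
    using assms by unfold_locales auto
  show "(\<Sum>(x, y)\<leftarrow>EQA \<Delta> r (bulletM \<Delta> s1 a b). \<phi> x y) =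
    (\<Sum>(x, y)\<leftarrow>bulletA \<Delta> (conv \<Delta> (symmetrization \<Delta> r) s1) (EQ \<Delta> r a) (EQ \<Delta> r b). \<phi> x y)"
    by (rule pairing_EQ_bullet)
qed

end
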